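(* Consider the model below with $M=M_f=N=1$ and $\epsilon_2\ge0$, and let $\bar{\epsilon}_{REE}\in[-\infty,\infty)$ be the number such that a rational expectations equilibrium (REE) exists if and only if $\epsilon_1\ge\bar{\epsilon}_{REE}$. If $\epsilon_1>\bar{\epsilon}_{REE}$, then (i) at most one E-stable REE exists, and (ii) any E-stable REE is of type PP or of type ZP.
   Context: Parameters: $0<\beta<1$, $\sigma,\lambda,\mu>0$, $\psi>1$, $p,q\in(0,1]$. The shock $\epsilon_t$ is a two-state Markov chain on $\{\epsilon_1,\epsilon_2\}$ with transition matrix $K=\begin{pmatrix}p&1-p\\1-q&q\end{pmatrix}$. Model: $x_t=E_t x_{t+1}-\sigma(i_t-E_t\pi_{t+1})+\epsilon_t$, $\pi_t=\lambda x_t+\beta E_t\pi_{t+1}$, $i_t=\max\{\psi\pi_t,-\mu\}$. An REE is a pair $Y_j=(x_j,\pi_j)$, $j=1,2$, with, for $j=1,2$ and $i_j=\max\{\psi\pi_j,-\mu\}$: $x_j=x^e_j-\sigma(i_j-\pi^e_j)+\epsilon_j$, $\pi_j=\lambda x_j+\beta\pi^e_j$, where $(x^e_1,\pi^e_1)=pY_1+(1-p)Y_2$, $(x^e_2,\pi^e_2)=(1-q)Y_1+qY_2$. Types: the ZLB binds in state $j$ if $\psi\pi_j\le-\mu$; type PP (binds in no state), ZP (binds in state 1 only), PZ (binds in state 2 only), ZZ (binds in both). Let $A_P=\frac{1}{1+\lambda\sigma\psi}\begin{pmatrix}1&\sigma-\beta\sigma\psi\\ \lambda&\beta+\lambda\sigma\end{pmatrix}$,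 $A_Z=\begin{pmatrix}1&\sigma\\ \lambda&\beta+\lambda\sigma\end{pmatrix}$, and $I$ the $4\times4$ identity. Define $DT^{PP}=K\otimes A_P-I$, $DT^{ZZ}=K\otimes A_Z-I$, $DT^{ZP}=\begin{pmatrix}pA_Z&(1-p)A_Z\\(1-q)A_P&qA_P\end{pmatrix}-I$, $DT^{PZ}=\begin{pmatrix}pA_P&(1-p)A_P\\(1-q)A_Z&qA_Z\end{pmatrix}-I$. An REE of type $i$ is E-stable if all eigenvalues of $DT^i$ have negative real parts. *)

theory Defs
  imports Complex_Main "HOL-Library.Extended_Real" "Jordan_Normal_Form.Char_Poly"
begin

(* Equilibria are 4-tuples (x1, pi1, x2, pi2), i.e. Y1 = (x1,pi1), Y2 = (x2,pi2).
   States 1,2 of the paper are indices 0,1 below. *)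
type_synonym ree = "real \<times> real \<times> real \<times> real"

definition is_REE ::
  "real \<Rightarrow> real \<Rightarrow> real \<Rightarrow> real \<Rightarrow> real \<Rightarrow> real \<Rightarrow> real \<Rightarrow> real \<Rightarrow> real \<Rightarrow> ree \<Rightarrow> bool" where
  "is_REE \<beta> \<sigma> lam \<mu> \<psi> p q e1 e2 Y =
     (case Y of (x1, \<pi>1, x2, \<pi>2) \<Rightarrow>
       let i1 = max (\<psi> * \<pi>1) (- \<mu>); i2 = max (\<psi> * \<pi>2) (- \<mu>);
           xe1 = p * x1 + (1 - p) * x2; pe1 = p * \<pi>1 + (1 - p) * \<pi>2;
           xe2 = (1 - q) * x1 + q * x2; pe2 = (1 - q) * \<pi>1 + q * \<pi>2
       in x1 = xe1 - \<sigma> * (i1 - pe1) + e1 \<and> \<pi>1 = lam * x1 + \<beta> * pe1 \<and>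
          x2 = xe2 - \<sigma> * (i2 - pe2) + e2 \<and> \<pi>2 = lam * x2 + \<beta> * pe2)"

datatype ree_type = PP | ZP | PZ | ZZ

definition zlb_binds :: "real \<Rightarrow> real \<Rightarrow> real \<Rightarrow> bool" where
  "zlb_binds \<mu> \<psi> \<pi>j = (\<psi> * \<pi>j \<le> - \<mu>)"

definition type_of :: "real \<Rightarrow> real \<Rightarrow> ree \<Rightarrow> ree_type" where
  "type_of \<mu> \<psi> Y = (case Y of (x1, \<pi>1, x2, \<pi>2) \<Rightarrow>
     (if zlb_binds \<mu> \<psi> \<pi>1 then (if zlb_binds \<mu> \<psi> \<pi>2 then ZZ else ZP)
      else (if zlb_binds \<mu> \<psi> \<pi>2 then PZ else PP)))"

definition A_P :: "real \<Rightarrow> real \<Rightarrow> real \<Rightarrow> real \<Rightarrow> nat \<Rightarrow> nat \<Rightarrow> real" where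
  "A_P \<beta> \<sigma> lam \<psi> i j = (1 / (1 + lam * \<sigma> * \<psi>)) *
     (if i = 0 then (if j = 0 then 1 else \<sigma> - \<beta> * \<sigma> * \<psi>)
      else (if j = 0 then lam else \<beta> + lam * \<sigma>))"

definition A_Z :: "real \<Rightarrow> real \<Rightarrow> real \<Rightarrow> nat \<Rightarrow> nat \<Rightarrow> real" where
  "A_Z \<beta> \<sigma> lam i j =
     (if i = 0 then (if j = 0 then 1 else \<sigma>)
      else (if j = 0 then lam else \<beta> + lam * \<sigma>))"

definition Kmat :: "real \<Rightarrow> real \<Rightarrow> nat \<Rightarrow> nat \<Rightarrow> real" where
  "Kmat p q r s = (if r = 0 then (if s = 0 then p else 1 - p)
                   else (if s = 0 then 1 - q else q))"

(* 4x4 matrix whose (r,s) 2x2 block is K_rs * B_r, minus the identity;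
   B_r is the 2x2 matrix used in block row r *)
definition block_DT :: "real \<Rightarrow> real \<Rightarrow> (nat \<Rightarrow> nat \<Rightarrow> nat \<Rightarrow> real) \<Rightarrow> complex mat" where
  "block_DT p q B = mat 4 4 (\<lambda>(i, j).
     complex_of_real (Kmat p q (i div 2) (j div 2) * B (i div 2) (i mod 2) (j mod 2)
                      - (if i = j then 1 else 0)))"

definition DT :: "real \<Rightarrow> real \<Rightarrow> real \<Rightarrow> real \<Rightarrow> real \<Rightarrow> real \<Rightarrow> ree_type \<Rightarrow> complex mat" where
  "DT \<beta> \<sigma> lam \<psi> p q t = (case t of
      PP \<Rightarrow> block_DT p q (\<lambda>r. A_P \<beta> \<sigma> lam \<psi>)
    | ZZ \<Rightarrow> block_DT p q (\<lambda>r. A_Z \<beta> \<sigma> lam)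
    | ZP \<Rightarrow> block_DT p q (\<lambda>r. if r = 0 then A_Z \<beta> \<sigma> lam else A_P \<beta> \<sigma> lam \<psi>)
    | PZ \<Rightarrow> block_DT p q (\<lambda>r. if r = 0 then A_P \<beta> \<sigma> lam \<psi> else A_Z \<beta> \<sigma> lam))"

definition E_stable ::
  "real \<Rightarrow> real \<Rightarrow> real \<Rightarrow> real \<Rightarrow> real \<Rightarrow> real \<Rightarrow> real \<Rightarrow> ree \<Rightarrow> bool" where
  "E_stable \<beta> \<sigma> lam \<mu> \<psi> p q Y =
     (\<forall>k. eigenvalue (DT \<beta> \<sigma> lam \<psi> p q (type_of \<mu> \<psi> Y)) k \<longrightarrow> Re k < 0)"

end

theory Submission
  imports Defs
begin

text \<open>
  Write k = lam \<sigma>. Eliminating the output gaps, an REE is a solution \<pi> = (\<pi>1, \<pi>2) of the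
  piecewise linear system G \<pi> + k max(\<psi> \<pi>, -\<mu>) = lam \<epsilon> with G = (I - K)(I - \<beta> K) - k K.
  For a type t let G_t(w) = (I - w K)(I - w \<beta> K) + k (S_t - w K), where the diagonal matrix S_t
  has entry \<psi> in the states where the lower bound is slack and 0 where it binds. A kernel vector
  of G_t(w) yields an eigenvector of DT^t with eigenvalue 1/w - 1, which is nonnegative for
  0 < w \<le> 1. As det G_t(0) > 0, E-stability of type t requires det G_t(1) > 0.
  Type ZZ is never E-stable, since the constant vector lies in the kernel of G_ZZ(w) at a root
  of (1 - w)(1 - \<beta> w) = k w, and a PZ solution with \<epsilon>2 \<ge> 0 forces det G_PZ(1) \<le> 0.
  Hence two E-stable REEs both have the bound slack in state 2. The difference of their max
  terms is \<theta> \<psi> (\<pi>1 - \<pi>1') with 0 \<le> \<theta> \<le> 1, so the differences solve a homogeneous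
  linear system whose determinant is det G_PP(1) > 0 if the bound is slack in state 1 for both,
  and at least det G_ZP(1) > 0 otherwise.
\<close>

lemma sum_lessThan_2: "(\<Sum>j<(2::nat). f j) = f 0 + (f 1 :: 'a::comm_monoid_add)"
  by (simp add: eval_nat_numeral)

lemma A_regime_solves_model:
  fixes \<beta> \<sigma> lam \<psi> :: real and binds :: bool
  defines "A \<equiv> if binds then A_Z \<beta> \<sigma> lam else A_P \<beta> \<sigma> lam \<psi>"
    and "s \<equiv> if binds then 0 else \<psi>"
  assumes "1 + lam * \<sigma> * \<psi> \<noteq> 0"
    and x: "x = xe - \<sigma> * (s * \<pi> - \<pi>e)" and \<pi>: "\<pi> = lam * x + \<beta> * \<pi>e"
  shows "A 0 0 * xe + A 0 1 * \<pi>e = x" and "A 1 0 * xe + A 1 1 * \<pi>e = \<pi>"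
proof -
  have "(A 0 0 * xe + A 0 1 * \<pi>e = x) \<and> (A 1 0 * xe + A 1 1 * \<pi>e = \<pi>)"
  proof (cases binds)
    case True
    then show ?thesis using x \<pi> by (simp add: A_def s_def A_Z_def algebra_simps)
  next
    case False
    have x': "(1 + lam * \<sigma> * \<psi>) * x = xe + (\<sigma> - \<beta> * \<sigma> * \<psi>) * \<pi>e"
      using False x \<pi> by (simp add: s_def algebra_simps)
    have "(1 + lam * \<sigma> * \<psi>) * \<pi> = lam * ((1 + lam * \<sigma> * \<psi>) * x) + (1 + lam * \<sigma> * \<psi>) * \<beta> * \<pi>e"
      using \<pi> by (simp add: algebra_simps)
    also have "\<dots> = lam * xe + (\<beta> + lam * \<sigma>) * \<pi>e"
      unfolding x' by (simp add: algebra_simps)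
    finally have \<pi>': "(1 + lam * \<sigma> * \<psi>) * \<pi> = lam * xe + (\<beta> + lam * \<sigma>) * \<pi>e" .
    have "A 0 0 * xe + A 0 1 * \<pi>e = (xe + (\<sigma> - \<beta> * \<sigma> * \<psi>) * \<pi>e) / (1 + lam * \<sigma> * \<psi>)"
      and "A 1 0 * xe + A 1 1 * \<pi>e = (lam * xe + (\<beta> + lam * \<sigma>) * \<pi>e) / (1 + lam * \<sigma> * \<psi>)"
      using False unfolding A_def A_P_def by (simp_all add: add_divide_distrib[symmetric])
    with x' \<pi>' show ?thesis using assms(3)
      by (metis nonzero_mult_div_cancel_left)
  qed
  then show "A 0 0 * xe + A 0 1 * \<pi>e = x" and "A 1 0 * xe + A 1 1 * \<pi>e = \<pi>" by simp_all
qed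

lemma eigenvalue_block_DT:
  fixes v :: "nat \<Rightarrow> nat \<Rightarrow> real"
  assumes eigen: "\<And>r c. r < 2 \<Longrightarrow> c < 2 \<Longrightarrow>
      (\<Sum>d<2. B r c d * (\<Sum>s<2. Kmat p q r s * v s d)) = z * v r c"
    and nonzero: "v r c \<noteq> 0" "r < 2" "c < 2"
  shows "eigenvalue (block_DT p q B) (complex_of_real (z - 1))"
proof -
  define u where "u = vec 4 (\<lambda>i. complex_of_real (v (i div 2) (i mod 2)))"
  have "u $ (2 * r + c) \<noteq> 0"
    using nonzero by (simp add: u_def)
  then have "u \<noteq> 0\<^sub>v 4"
    using nonzero by auto
  moreover have "block_DT p q B *\<^sub>v u = complex_of_real (z - 1) \<cdot>\<^sub>v u"
  proof (rule eq_vecI)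
    fix i assume "i < dim_vec (complex_of_real (z - 1) \<cdot>\<^sub>v u)"
    then have i: "i < 4" by (simp add: u_def)
    have "(block_DT p q B *\<^sub>v u) $ i = complex_of_real (\<Sum>j<4.
        (Kmat p q (i div 2) (j div 2) * B (i div 2) (i mod 2) (j mod 2) - (if i = j then 1 else 0))
        * v (j div 2) (j mod 2))"
      using i by (simp add: block_DT_def u_def scalar_prod_def lessThan_atLeast0)
    also have "\<dots> = complex_of_real ((z - 1) * v (i div 2) (i mod 2))"
    proof -
      have sum4: "(\<Sum>j<4. f j) = f 0 + f 1 + f 2 + f 3" for f :: "nat \<Rightarrow> real"
        by (simp add: eval_nat_numeral)
      consider "i = 0" | "i = 1" | "i = 2" | "i = 3" using i by linarith
      then have "(\<Sum>j<4. (Kmat p q (i div 2) (j div 2) * B (i div 2) (i mod 2) (j mod 2)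
          - (if i = j then 1 else 0)) * v (j div 2) (j mod 2)) = (z - 1) * v (i div 2) (i mod 2)"
        using eigen[of "i div 2" "i mod 2"]
        by cases (simp_all only: sum4 sum_lessThan_2, simp_all add: algebra_simps)
      then show ?thesis by (simp only:)
    qed
    finally show "(block_DT p q B *\<^sub>v u) $ i = (complex_of_real (z - 1) \<cdot>\<^sub>v u) $ i"
      using i by (simp add: u_def)
  qed (simp add: block_DT_def u_def)
  ultimately show ?thesis
    unfolding eigenvalue_def eigenvector_def by (intro exI[of _ u]) (auto simp: u_def block_DT_def)
qed

fun zlb_binds_in :: "ree_type \<Rightarrow> nat \<Rightarrow> bool" where
  "zlb_binds_in PP r = False"
| "zlb_binds_in ZP r = (r = 0)"
| "zlb_binds_in PZ r = (r \<noteq> 0)"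
| "zlb_binds_in ZZ r = True"

lemma zlb_binds_in_type_of:
  "zlb_binds_in (type_of \<mu> \<psi> (x1, \<pi>1, x2, \<pi>2)) 0 = zlb_binds \<mu> \<psi> \<pi>1"
  "zlb_binds_in (type_of \<mu> \<psi> (x1, \<pi>1, x2, \<pi>2)) 1 = zlb_binds \<mu> \<psi> \<pi>2"
  by (simp_all add: type_of_def)

lemma DT_eq_block_DT:
  "DT \<beta> \<sigma> lam \<psi> p q t =
     block_DT p q (\<lambda>r. if zlb_binds_in t r then A_Z \<beta> \<sigma> lam else A_P \<beta> \<sigma> lam \<psi>)"
  unfolding DT_def by (cases t) (auto intro!: arg_cong[where f = "block_DT p q"])

definition regime_matrix ::
  "real \<Rightarrow> real \<Rightarrow> real \<Rightarrow> real \<Rightarrow> real \<Rightarrow> ree_type \<Rightarrow> real \<Rightarrow> nat \<Rightarrow> nat \<Rightarrow> real" where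
  "regime_matrix \<beta> k \<psi> p q t w i j =
     (\<Sum>l<2. (of_bool (i = l) - w * Kmat p q i l) * (of_bool (l = j) - w * \<beta> * Kmat p q l j))
     + k * (of_bool (i = j \<and> \<not> zlb_binds_in t i) * \<psi> - w * Kmat p q i j)"

lemma regime_matrix_eq_ZZ:
  "regime_matrix \<beta> k \<psi> p q t w i j
     = regime_matrix \<beta> k \<psi> p q ZZ w i j + of_bool (i = j \<and> \<not> zlb_binds_in t i) * k * \<psi>"
  by (simp add: regime_matrix_def algebra_simps)

lemma regime_matrix_ZZ_row_sum:
  assumes "i < 2"
  shows "(\<Sum>j<2. regime_matrix \<beta> k \<psi> p q ZZ w i j) = (1 - w) * (1 - \<beta> * w) - k * w"
  using assms by (auto simp: regime_matrix_def Kmat_def sum_lessThan_2 less_2_cases_iff algebra_simps)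

lemma regime_matrix_off_diag_nonpos:
  assumes "0 \<le> \<beta>" "\<beta> \<le> 1" "0 \<le> k" "0 \<le> p" "p \<le> 1" "0 \<le> q" "q \<le> 1"
    and "i < 2" "j < 2" "i \<noteq> j"
  shows "regime_matrix \<beta> k \<psi> p q t 1 i j \<le> 0"
proof -
  have "\<beta> * p \<le> 1" "\<beta> * q \<le> 1"
    using assms(1-7) by (simp_all add: mult_le_one)
  then have "0 \<le> (1 - p) * (\<beta> * (1 - p) + (1 - \<beta> * q) + k)"
    and "0 \<le> (1 - q) * (\<beta> * (1 - q) + (1 - \<beta> * p) + k)"
    using assms(1-7) by simp_all
  moreover have "i = 0 \<and> j = 1 \<or> i = 1 \<and> j = 0"
    using assms(8-10) by linarith
  ultimately show ?thesis
    by (auto simp: regime_matrix_def Kmat_def sum_lessThan_2 algebra_simps)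
qed

lemma eigenvalue_DT_if_regime_kernel:
  fixes \<pi> :: "nat \<Rightarrow> real"
  assumes "0 < lam" "0 < \<sigma>" "0 \<le> \<psi>" "0 < w"
    and kernel: "\<And>i. i < 2 \<Longrightarrow> (\<Sum>j<2. regime_matrix \<beta> (lam * \<sigma>) \<psi> p q t w i j * \<pi> j) = 0"
    and nonzero: "\<pi> r \<noteq> 0" "r < 2"
  shows "eigenvalue (DT \<beta> \<sigma> lam \<psi> p q t) (complex_of_real (1 / w - 1))"
proof -
  define E where "E f r = (\<Sum>s<2. Kmat p q r s * f s)" for f :: "nat \<Rightarrow> real" and r
  define x where "x r = (\<pi> r - w * \<beta> * E \<pi> r) / lam" for r
  define B where "B = (\<lambda>r. if zlb_binds_in t r then A_Z \<beta> \<sigma> lam else A_P \<beta> \<sigma> lam \<psi>)"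
  define v where "v r c = (if c = 0 then x r else \<pi> r)" for r c :: nat
  have "0 \<le> lam * \<sigma> * \<psi>"
    using assms(1-3) by simp
  then have "1 + lam * \<sigma> * \<psi> \<noteq> 0"
    by linarith
  \<comment> \<open>In each state, (x, \<pi>) is the model's response to the expectations w E (x, \<pi>).\<close>
  have "B r 0 0 * (w * E x r) + B r 0 1 * (w * E \<pi> r) = x r
      \<and> B r 1 0 * (w * E x r) + B r 1 1 * (w * E \<pi> r) = \<pi> r" if "r < 2" for r
  proof -
    let ?s = "if zlb_binds_in t r then 0 else \<psi>"
    have "lam * (x r - (w * E x r - \<sigma> * (?s * \<pi> r - w * E \<pi> r)))
        = (\<Sum>j<2. regime_matrix \<beta> (lam * \<sigma>) \<psi> p q t w r j * \<pi> j)"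
    proof -
      consider "r = 0" | "r = 1" using \<open>r < 2\<close> by linarith
      then show ?thesis
        using \<open>0 < lam\<close> by cases (simp_all add: sum_lessThan_2 x_def E_def regime_matrix_def Kmat_def field_simps)
    qed
    with kernel[OF \<open>r < 2\<close>] \<open>0 < lam\<close> have "x r = w * E x r - \<sigma> * (?s * \<pi> r - w * E \<pi> r)"
      by simp
    moreover have "\<pi> r = lam * x r + \<beta> * (w * E \<pi> r)"
      using \<open>0 < lam\<close> by (simp add: x_def)
    ultimately show ?thesis
      using A_regime_solves_model[OF \<open>1 + lam * \<sigma> * \<psi> \<noteq> 0\<close>, of "x r" "w * E x r" _ "\<pi> r"]
      unfolding B_def by simp
  qed
  then have "(\<Sum>d<2. B r c d * (\<Sum>s<2. Kmat p q r s * v s d)) = 1 / w * v r c"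
    if "r < 2" "c < 2" for r c
    using that \<open>0 < w\<close> by (auto simp: sum_lessThan_2 v_def E_def less_2_cases_iff field_simps)
  then show ?thesis
    using eigenvalue_block_DT[of B p q v "1 / w" r 1] nonzero
    by (simp add: DT_eq_block_DT B_def v_def)
qed

definition det2 :: "(nat \<Rightarrow> nat \<Rightarrow> real) \<Rightarrow> real" where
  "det2 M = M 0 0 * M 1 1 - M 0 1 * M 1 0"

lemma det2_eq_0_imp_kernel:
  assumes "det2 M = 0"
  obtains \<pi> r where "r < 2" "\<pi> r \<noteq> 0" "\<And>i. i < 2 \<Longrightarrow> (\<Sum>j<2. M i j * \<pi> j) = 0"
proof -
  define \<pi> :: "nat \<Rightarrow> real" where "\<pi> = (if M 0 0 = 0 \<and> M 0 1 = 0 then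
      (if M 1 0 = 0 \<and> M 1 1 = 0 then (\<lambda>j. 1) else (\<lambda>j. if j = 0 then M 1 1 else - M 1 0))
    else (\<lambda>j. if j = 0 then M 0 1 else - M 0 0))"
  have "\<pi> 0 \<noteq> 0 \<or> \<pi> 1 \<noteq> 0"
    by (auto simp: \<pi>_def)
  moreover have "(0::nat) < 2" "(1::nat) < 2"
    by simp_all
  ultimately have "\<exists>r<2. \<pi> r \<noteq> 0"
    by blast
  moreover have "(\<Sum>j<2. M i j * \<pi> j) = 0" if "i < 2" for i
  proof -
    have "i = 0 \<or> i = 1"
      using that by linarith
    then show ?thesis
      using assms by (auto simp: \<pi>_def det2_def sum_lessThan_2 algebra_simps)
  qed
  ultimately show ?thesis
    using that by blast
qed

lemma DT_nonneg_eigenvalue_if_regime_singular: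
  assumes "0 < lam" "0 < \<sigma>" "0 \<le> \<psi>" "0 < w" "w \<le> 1"
    and "det2 (regime_matrix \<beta> (lam * \<sigma>) \<psi> p q t w) = 0"
  shows "\<exists>z. eigenvalue (DT \<beta> \<sigma> lam \<psi> p q t) z \<and> 0 \<le> Re z"
proof -
  obtain \<pi> r where "r < 2" "\<pi> r \<noteq> 0"
    and "\<And>i. i < 2 \<Longrightarrow> (\<Sum>j<2. regime_matrix \<beta> (lam * \<sigma>) \<psi> p q t w i j * \<pi> j) = 0"
    using det2_eq_0_imp_kernel[OF assms(6)] by blast
  then have "eigenvalue (DT \<beta> \<sigma> lam \<psi> p q t) (complex_of_real (1 / w - 1))"
    using assms(1-4) by (intro eigenvalue_DT_if_regime_kernel) auto
  moreover have "0 \<le> 1 / w - 1"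
    using assms(4,5) by simp
  ultimately show ?thesis
    by force
qed

lemma DT_nonneg_eigenvalue_if_regime_det_nonpos:
  assumes "0 < lam" "0 < \<sigma>" "0 \<le> \<psi>"
    and "det2 (regime_matrix \<beta> (lam * \<sigma>) \<psi> p q t 1) \<le> 0"
  shows "\<exists>z. eigenvalue (DT \<beta> \<sigma> lam \<psi> p q t) z \<and> 0 \<le> Re z"
proof -
  let ?h = "\<lambda>w. det2 (regime_matrix \<beta> (lam * \<sigma>) \<psi> p q t w)"
  have "0 < (1 + lam * \<sigma> * of_bool (\<not> zlb_binds_in t 0) * \<psi>)
      * (1 + lam * \<sigma> * of_bool (\<not> zlb_binds_in t 1) * \<psi>)"
    using assms(1-3) by (intro mult_pos_pos add_pos_nonneg) auto
  also have "\<dots> = ?h 0"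
    by (simp add: det2_def regime_matrix_def sum_lessThan_2)
  finally have "0 < ?h 0" .
  moreover have "\<forall>w. 0 \<le> w \<and> w \<le> 1 \<longrightarrow> isCont ?h w"
    by (simp add: det2_def regime_matrix_def sum_lessThan_2)
  ultimately obtain w where "0 \<le> w" "w \<le> 1" "?h w = 0"
    using IVT2[of ?h 1 0 0] assms(4) by auto
  moreover have "w \<noteq> 0"
    using \<open>0 < ?h 0\<close> \<open>?h w = 0\<close> by auto
  ultimately show ?thesis
    using assms(1-3) by (intro DT_nonneg_eigenvalue_if_regime_singular) auto
qed

lemma DT_ZZ_nonneg_eigenvalue:
  assumes "0 < lam" "0 < \<sigma>" "0 \<le> \<psi>"
  shows "\<exists>z. eigenvalue (DT \<beta> \<sigma> lam \<psi> p q ZZ) z \<and> 0 \<le> Re z"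
proof -
  let ?f = "\<lambda>w. (1 - w) * (1 - \<beta> * w) - lam * \<sigma> * w"
  have "\<forall>w. 0 \<le> w \<and> w \<le> 1 \<longrightarrow> isCont ?f w"
    by simp
  moreover have "?f 1 \<le> 0"
    using assms by simp
  ultimately obtain w where w: "0 \<le> w" "w \<le> 1" "?f w = 0"
    using IVT2[of ?f 1 0 0] by auto
  then have "w \<noteq> 0"
    by auto
  have "(\<Sum>j<2. regime_matrix \<beta> (lam * \<sigma>) \<psi> p q ZZ w i j * 1) = ?f w" if "i < 2" for i
    using regime_matrix_ZZ_row_sum[OF that] by simp
  then have "eigenvalue (DT \<beta> \<sigma> lam \<psi> p q ZZ) (complex_of_real (1 / w - 1))"
    using assms w \<open>w \<noteq> 0\<close> by (intro eigenvalue_DT_if_regime_kernel[where \<pi> = "\<lambda>j. 1" and r = 0]) auto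
  moreover have "0 \<le> 1 / w - 1"
    using w \<open>w \<noteq> 0\<close> by simp
  ultimately show ?thesis
    by force
qed

lemma is_REE_reduced_system:
  assumes "is_REE \<beta> \<sigma> lam \<mu> \<psi> p q e1 e2 (x1, \<pi>1, x2, \<pi>2)"
  defines "G \<equiv> regime_matrix \<beta> (lam * \<sigma>) \<psi> p q ZZ 1"
  shows "G 0 0 * \<pi>1 + G 0 1 * \<pi>2 + lam * \<sigma> * max (\<psi> * \<pi>1) (- \<mu>) = lam * e1"
    and "G 1 0 * \<pi>1 + G 1 1 * \<pi>2 + lam * \<sigma> * max (\<psi> * \<pi>2) (- \<mu>) = lam * e2"
    and "lam * x1 = \<pi>1 - \<beta> * (p * \<pi>1 + (1 - p) * \<pi>2)"
    and "lam * x2 = \<pi>2 - \<beta> * ((1 - q) * \<pi>1 + q * \<pi>2)"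
proof -
  let ?i1 = "max (\<psi> * \<pi>1) (- \<mu>)" and ?i2 = "max (\<psi> * \<pi>2) (- \<mu>)"
  have x1: "x1 = p * x1 + (1 - p) * x2 - \<sigma> * (?i1 - (p * \<pi>1 + (1 - p) * \<pi>2)) + e1"
    and x2: "x2 = (1 - q) * x1 + q * x2 - \<sigma> * (?i2 - ((1 - q) * \<pi>1 + q * \<pi>2)) + e2"
    and \<pi>1: "\<pi>1 = lam * x1 + \<beta> * (p * \<pi>1 + (1 - p) * \<pi>2)"
    and \<pi>2: "\<pi>2 = lam * x2 + \<beta> * ((1 - q) * \<pi>1 + q * \<pi>2)"
    using assms(1) by (simp_all add: is_REE_def Let_def)
  show lx1: "lam * x1 = \<pi>1 - \<beta> * (p * \<pi>1 + (1 - p) * \<pi>2)"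
    and lx2: "lam * x2 = \<pi>2 - \<beta> * ((1 - q) * \<pi>1 + q * \<pi>2)"
    using \<pi>1 \<pi>2 by simp_all
  have "G 0 0 * \<pi>1 + G 0 1 * \<pi>2
      = (1 - p) * (lam * x1) - (1 - p) * (lam * x2) - lam * \<sigma> * (p * \<pi>1 + (1 - p) * \<pi>2)"
    unfolding lx1 lx2 G_def by (simp add: regime_matrix_def Kmat_def sum_lessThan_2 algebra_simps)
  also have "\<dots> = lam * e1 - lam * \<sigma> * ?i1"
    using arg_cong[OF x1, of "\<lambda>y. lam * y"] by (simp add: algebra_simps)
  finally show "G 0 0 * \<pi>1 + G 0 1 * \<pi>2 + lam * \<sigma> * ?i1 = lam * e1"
    by simp
  have "G 1 0 * \<pi>1 + G 1 1 * \<pi>2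
      = (1 - q) * (lam * x2) - (1 - q) * (lam * x1) - lam * \<sigma> * ((1 - q) * \<pi>1 + q * \<pi>2)"
    unfolding lx1 lx2 G_def by (simp add: regime_matrix_def Kmat_def sum_lessThan_2 algebra_simps)
  also have "\<dots> = lam * e2 - lam * \<sigma> * ?i2"
    using arg_cong[OF x2, of "\<lambda>y. lam * y"] by (simp add: algebra_simps)
  finally show "G 1 0 * \<pi>1 + G 1 1 * \<pi>2 + lam * \<sigma> * ?i2 = lam * e2"
    by simp
qed

lemma max_increment_factor:
  fixes y y' m :: real
  obtains \<theta> where "0 \<le> \<theta>" "\<theta> \<le> 1" "max y m - max y' m = \<theta> * (y - y')"
    and "m < y \<Longrightarrow> m < y' \<Longrightarrow> \<theta> = 1"
proof -
  define \<theta> where "\<theta> = (if y = y' then 1 else (max y m - max y' m) / (y - y'))"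
  have "0 \<le> \<theta> \<and> \<theta> \<le> 1"
    by (auto simp: \<theta>_def max_def divide_simps)
  moreover have "max y m - max y' m = \<theta> * (y - y')"
    by (simp add: \<theta>_def)
  moreover have "\<theta> = 1" if "m < y" "m < y'"
    using that by (simp add: \<theta>_def)
  ultimately show ?thesis
    using that by blast
qed

lemma homogeneous_2x2_unique:
  fixes a b c d x y :: real
  assumes "a * x + b * y = 0" "c * x + d * y = 0" "a * d - b * c \<noteq> 0"
  shows "x = 0 \<and> y = 0"
proof -
  have "(a * d - b * c) * x = d * (a * x + b * y) - b * (c * x + d * y)"
    and "(a * d - b * c) * y = a * (c * x + d * y) - c * (a * x + b * y)"
    by (simp_all add: algebra_simps)
  then have "(a * d - b * c) * x = 0 \<and> (a * d - b * c) * y = 0"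
    using assms(1,2) by simp
  then show ?thesis
    using assms(3) by simp
qed

locale zlb_system =
  fixes a b c d k \<psi> \<mu> :: real
  assumes row_sums: "a + b = - k" "c + d = - k"
    and off_diag_nonpos: "b \<le> 0" "c \<le> 0"
    and k_pos: "0 < k" and \<psi>_gt_1: "1 < \<psi>" and \<mu>_pos: "0 < \<mu>"
begin

lemma active_diag_gt: "- b < a + k * \<psi>" "- c < d + k * \<psi>"
proof -
  have "k < k * \<psi>"
    using k_pos \<psi>_gt_1 by simp
  then show "- b < a + k * \<psi>" "- c < d + k * \<psi>"
    using row_sums by linarith+
qed

lemma det_PP_pos: "b * c < (a + k * \<psi>) * (d + k * \<psi>)"
proof -
  have "(- b) * (- c) < (a + k * \<psi>) * (d + k * \<psi>)"
    using active_diag_gt off_diag_nonpos by (intro mult_strict_mono) auto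
  then show ?thesis
    by simp
qed

lemma PZ_solution_det_nonpos:
  assumes "0 \<le> c * \<pi>1 + d * \<pi>2 + k * max (\<psi> * \<pi>2) (- \<mu>)"
    and "\<not> zlb_binds \<mu> \<psi> \<pi>1" "zlb_binds \<mu> \<psi> \<pi>2"
  shows "(a + k * \<psi>) * d - b * c \<le> 0"
proof (cases "d < 0")
  case True
  then have "(a + k * \<psi>) * d < 0"
    using active_diag_gt off_diag_nonpos by (simp add: mult_pos_neg)
  moreover have "0 \<le> b * c"
    using off_diag_nonpos by (simp add: mult_nonpos_nonpos)
  ultimately show ?thesis
    by linarith
next
  case False
  have "- \<mu> \<le> \<psi> * \<pi>1" "\<psi> * \<pi>2 \<le> - \<mu>"
    using assms(2,3) by (auto simp: zlb_binds_def)
  then have "c * (\<psi> * \<pi>1) \<le> c * - \<mu>" "d * (\<psi> * \<pi>2) \<le> d * - \<mu>"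
    using off_diag_nonpos(2) False by (intro mult_left_mono_neg mult_left_mono; simp)+
  then have "\<psi> * (c * \<pi>1 + d * \<pi>2 + k * max (\<psi> * \<pi>2) (- \<mu>)) \<le> - \<mu> * (c + d) - k * \<psi> * \<mu>"
    using assms(3) unfolding zlb_binds_def by (simp add: algebra_simps)
  also have "\<dots> = - k * \<mu> * (\<psi> - 1)"
    using row_sums by (simp add: algebra_simps)
  also have "\<dots> < 0"
    using k_pos \<mu>_pos \<psi>_gt_1 by simp
  finally have "\<psi> * (c * \<pi>1 + d * \<pi>2 + k * max (\<psi> * \<pi>2) (- \<mu>)) < 0" .
  moreover have "0 \<le> \<psi> * (c * \<pi>1 + d * \<pi>2 + k * max (\<psi> * \<pi>2) (- \<mu>))"
    using assms(1) \<psi>_gt_1 by simp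
  ultimately show ?thesis
    by linarith
qed

lemma solutions_eq:
  assumes row1: "a * \<pi>1 + b * \<pi>2 + k * max (\<psi> * \<pi>1) (- \<mu>) = a * \<pi>1' + b * \<pi>2' + k * max (\<psi> * \<pi>1') (- \<mu>)"
    and row2: "c * \<pi>1 + d * \<pi>2 + k * max (\<psi> * \<pi>2) (- \<mu>) = c * \<pi>1' + d * \<pi>2' + k * max (\<psi> * \<pi>2') (- \<mu>)"
    and "\<not> zlb_binds \<mu> \<psi> \<pi>2" "\<not> zlb_binds \<mu> \<psi> \<pi>2'"
    and "\<not> zlb_binds \<mu> \<psi> \<pi>1 \<and> \<not> zlb_binds \<mu> \<psi> \<pi>1' \<or> b * c < a * (d + k * \<psi>)"
  shows "\<pi>1 = \<pi>1' \<and> \<pi>2 = \<pi>2'"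
proof -
  obtain \<theta> where \<theta>: "0 \<le> \<theta>" "\<theta> \<le> 1"
      "max (\<psi> * \<pi>1) (- \<mu>) - max (\<psi> * \<pi>1') (- \<mu>) = \<theta> * (\<psi> * \<pi>1 - \<psi> * \<pi>1')"
    and \<theta>_1: "- \<mu> < \<psi> * \<pi>1 \<Longrightarrow> - \<mu> < \<psi> * \<pi>1' \<Longrightarrow> \<theta> = 1"
    using max_increment_factor[where y = "\<psi> * \<pi>1" and y' = "\<psi> * \<pi>1'" and m = "- \<mu>"] by blast
  have eq1: "(a + \<theta> * k * \<psi>) * (\<pi>1 - \<pi>1') + b * (\<pi>2 - \<pi>2') = 0"
  proof -
    have "k * (max (\<psi> * \<pi>1) (- \<mu>) - max (\<psi> * \<pi>1') (- \<mu>)) = \<theta> * k * \<psi> * (\<pi>1 - \<pi>1')"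
      unfolding \<theta>(3) by (simp add: algebra_simps)
    with row1 show ?thesis
      by (simp add: algebra_simps)
  qed
  have eq2: "c * (\<pi>1 - \<pi>1') + (d + k * \<psi>) * (\<pi>2 - \<pi>2') = 0"
    using row2 assms(3,4) by (simp add: zlb_binds_def algebra_simps)
  have "b * c < (a + \<theta> * k * \<psi>) * (d + k * \<psi>)"
    using assms(5)
  proof
    assume "\<not> zlb_binds \<mu> \<psi> \<pi>1 \<and> \<not> zlb_binds \<mu> \<psi> \<pi>1'"
    then have "\<theta> = 1"
      by (intro \<theta>_1) (auto simp: zlb_binds_def)
    then show ?thesis
      using det_PP_pos by simp
  next
    assume "b * c < a * (d + k * \<psi>)"
    moreover have "0 \<le> \<theta> * k * \<psi> * (d + k * \<psi>)"
      using \<theta>(1) k_pos \<psi>_gt_1 active_diag_gt(2) off_diag_nonpos(2) by simp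
    ultimately show ?thesis
      by (simp add: algebra_simps)
  qed
  then have "(a + \<theta> * k * \<psi>) * (d + k * \<psi>) - b * c \<noteq> 0"
    by linarith
  with eq1 eq2 have "\<pi>1 - \<pi>1' = 0 \<and> \<pi>2 - \<pi>2' = 0"
    by (rule homogeneous_2x2_unique)
  then show ?thesis
    by simp
qed

end

locale nk_model =
  fixes \<beta> \<sigma> lam \<mu> \<psi> p q :: real
  assumes \<beta>_nonneg: "0 \<le> \<beta>" and \<beta>_le_1: "\<beta> \<le> 1" and \<sigma>_pos: "0 < \<sigma>" and lam_pos: "0 < lam"
    and \<mu>_pos: "0 < \<mu>" and \<psi>_gt_1: "1 < \<psi>"
    and p_prob: "0 \<le> p" "p \<le> 1" and q_prob: "0 \<le> q" "q \<le> 1"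
begin

abbreviation G :: "nat \<Rightarrow> nat \<Rightarrow> real" where
  "G \<equiv> regime_matrix \<beta> (lam * \<sigma>) \<psi> p q ZZ 1"

sublocale zlb_system "G 0 0" "G 0 1" "G 1 0" "G 1 1" "lam * \<sigma>" \<psi> \<mu>
proof
  show "G 0 0 + G 0 1 = - (lam * \<sigma>)" "G 1 0 + G 1 1 = - (lam * \<sigma>)"
    using regime_matrix_ZZ_row_sum[of 0 \<beta> "lam * \<sigma>" \<psi> p q 1]
      regime_matrix_ZZ_row_sum[of 1 \<beta> "lam * \<sigma>" \<psi> p q 1]
    by (simp_all add: sum_lessThan_2)
  show "G 0 1 \<le> 0" "G 1 0 \<le> 0"
    using \<beta>_nonneg \<beta>_le_1 \<sigma>_pos lam_pos p_prob q_prob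
    by (simp_all add: regime_matrix_off_diag_nonpos)
qed (use \<sigma>_pos lam_pos \<psi>_gt_1 \<mu>_pos in simp_all)

lemma det2_regime_matrix_1:
  "det2 (regime_matrix \<beta> (lam * \<sigma>) \<psi> p q t 1)
     = (G 0 0 + of_bool (\<not> zlb_binds_in t 0) * (lam * \<sigma>) * \<psi>)
       * (G 1 1 + of_bool (\<not> zlb_binds_in t 1) * (lam * \<sigma>) * \<psi>) - G 0 1 * G 1 0"
  by (simp add: det2_def regime_matrix_eq_ZZ[of \<beta> "lam * \<sigma>" \<psi> p q t])

lemma E_stable_REE_type:
  assumes REE: "is_REE \<beta> \<sigma> lam \<mu> \<psi> p q e1 e2 Y" and "0 \<le> e2"
    and stable: "E_stable \<beta> \<sigma> lam \<mu> \<psi> p q Y"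
  shows "type_of \<mu> \<psi> Y = PP
    \<or> type_of \<mu> \<psi> Y = ZP \<and> 0 < det2 (regime_matrix \<beta> (lam * \<sigma>) \<psi> p q ZP 1)"
proof -
  obtain x1 \<pi>1 x2 \<pi>2 where Y: "Y = (x1, \<pi>1, x2, \<pi>2)"
    by (cases Y)
  have no_unstable_eigenvalue: "\<not> (\<exists>z. eigenvalue (DT \<beta> \<sigma> lam \<psi> p q (type_of \<mu> \<psi> Y)) z \<and> 0 \<le> Re z)"
    using stable by (auto simp: E_stable_def)
  have "0 \<le> \<psi>"
    using \<psi>_gt_1 by simp
  have det_pos: "0 < det2 (regime_matrix \<beta> (lam * \<sigma>) \<psi> p q (type_of \<mu> \<psi> Y) 1)"
  proof (rule ccontr)
    assume "\<not> ?thesis"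
    then show False
      using DT_nonneg_eigenvalue_if_regime_det_nonpos[OF lam_pos \<sigma>_pos \<open>0 \<le> \<psi>\<close>] no_unstable_eigenvalue by simp
  qed
  show ?thesis
  proof (cases "type_of \<mu> \<psi> Y")
    case ZZ
    then show ?thesis
      using no_unstable_eigenvalue DT_ZZ_nonneg_eigenvalue[OF lam_pos \<sigma>_pos \<open>0 \<le> \<psi>\<close>] by simp
  next
    case ZP
    with det_pos show ?thesis
      by simp
  next
    case PZ
    then have "\<not> zlb_binds \<mu> \<psi> \<pi>1" "zlb_binds \<mu> \<psi> \<pi>2"
      using zlb_binds_in_type_of[of \<mu> \<psi> x1 \<pi>1 x2 \<pi>2] Y by auto
    moreover have "0 \<le> G 1 0 * \<pi>1 + G 1 1 * \<pi>2 + lam * \<sigma> * max (\<psi> * \<pi>2) (- \<mu>)"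
      using is_REE_reduced_system(2)[OF REE[unfolded Y]] lam_pos \<open>0 \<le> e2\<close> by simp
    ultimately have "det2 (regime_matrix \<beta> (lam * \<sigma>) \<psi> p q PZ 1) \<le> 0"
      using PZ_solution_det_nonpos by (simp add: det2_regime_matrix_1)
    with PZ det_pos show ?thesis
      by simp
  qed simp
qed

lemma E_stable_REE_unique:
  assumes "0 \<le> e2"
    and REE: "is_REE \<beta> \<sigma> lam \<mu> \<psi> p q e1 e2 Y" "E_stable \<beta> \<sigma> lam \<mu> \<psi> p q Y"
    and REE': "is_REE \<beta> \<sigma> lam \<mu> \<psi> p q e1 e2 Y'" "E_stable \<beta> \<sigma> lam \<mu> \<psi> p q Y'"
  shows "Y = Y'"
proof -
  obtain x1 \<pi>1 x2 \<pi>2 where Y: "Y = (x1, \<pi>1, x2, \<pi>2)"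
    by (cases Y)
  obtain x1' \<pi>1' x2' \<pi>2' where Y': "Y' = (x1', \<pi>1', x2', \<pi>2')"
    by (cases Y')
  note sol = is_REE_reduced_system[OF REE(1)[unfolded Y]] and sol' = is_REE_reduced_system[OF REE'(1)[unfolded Y']]
  let ?det_ZP = "det2 (regime_matrix \<beta> (lam * \<sigma>) \<psi> p q ZP 1)"
  have "type_of \<mu> \<psi> Y = PP \<or> type_of \<mu> \<psi> Y = ZP \<and> 0 < ?det_ZP"
    and "type_of \<mu> \<psi> Y' = PP \<or> type_of \<mu> \<psi> Y' = ZP \<and> 0 < ?det_ZP"
    using E_stable_REE_type assms by blast+
  then have "\<not> zlb_binds \<mu> \<psi> \<pi>2" "\<not> zlb_binds \<mu> \<psi> \<pi>2'"
    and "\<not> zlb_binds \<mu> \<psi> \<pi>1 \<and> \<not> zlb_binds \<mu> \<psi> \<pi>1' \<or> 0 < ?det_ZP"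
    using zlb_binds_in_type_of[of \<mu> \<psi> x1 \<pi>1 x2 \<pi>2] zlb_binds_in_type_of[of \<mu> \<psi> x1' \<pi>1' x2' \<pi>2'] Y Y'
    by auto
  moreover have "?det_ZP = G 0 0 * (G 1 1 + lam * \<sigma> * \<psi>) - G 0 1 * G 1 0"
    unfolding det2_regime_matrix_1 by (simp add: algebra_simps)
  ultimately have "\<pi>1 = \<pi>1' \<and> \<pi>2 = \<pi>2'"
    using sol(1,2) sol'(1,2) by (intro solutions_eq) simp_all
  with sol(3,4) sol'(3,4) have "lam * x1 = lam * x1' \<and> lam * x2 = lam * x2'"
    by simp
  with lam_pos have "x1 = x1' \<and> x2 = x2'"
    by simp
  with \<open>\<pi>1 = \<pi>1' \<and> \<pi>2 = \<pi>2'\<close> show ?thesis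
    using Y Y' by simp
qed

end

theorem proposition7:
  fixes \<beta> \<sigma> lam \<mu> \<psi> p q e1 e2 :: real and \<epsilon>bar :: ereal
  assumes "0 < \<beta>" "\<beta> < 1" "0 < \<sigma>" "0 < lam" "0 < \<mu>" "1 < \<psi>"
    and "0 < p" "p \<le> 1" "0 < q" "q \<le> 1"
    and "0 \<le> e2"
    and "\<epsilon>bar \<noteq> \<infinity>"
    and thr: "\<And>e. (\<exists>Y. is_REE \<beta> \<sigma> lam \<mu> \<psi> p q e e2 Y) \<longleftrightarrow> \<epsilon>bar \<le> ereal e"
    and "\<epsilon>bar < ereal e1"
  shows "(\<forall>Y Y'. is_REE \<beta> \<sigma> lam \<mu> \<psi> p q e1 e2 Y \<and> E_stable \<beta> \<sigma> lam \<mu> \<psi> p q Y \<and>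
                is_REE \<beta> \<sigma> lam \<mu> \<psi> p q e1 e2 Y' \<and> E_stable \<beta> \<sigma> lam \<mu> \<psi> p q Y' \<longrightarrow> Y = Y')
       \<and> (\<forall>Y. is_REE \<beta> \<sigma> lam \<mu> \<psi> p q e1 e2 Y \<and> E_stable \<beta> \<sigma> lam \<mu> \<psi> p q Y \<longrightarrow>
                type_of \<mu> \<psi> Y \<in> {PP, ZP})"
proof -
  interpret nk_model \<beta> \<sigma> lam \<mu> \<psi> p q
    using assms(1-10) by unfold_locales auto
  have "type_of \<mu> \<psi> Y \<in> {PP, ZP}"
    if "is_REE \<beta> \<sigma> lam \<mu> \<psi> p q e1 e2 Y" "E_stable \<beta> \<sigma> lam \<mu> \<psi> p q Y" for Y
    using E_stable_REE_type[OF that(1) \<open>0 \<le> e2\<close> that(2)] by auto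
  moreover have "Y = Y'"
    if "is_REE \<beta> \<sigma> lam \<mu> \<psi> p q e1 e2 Y" "E_stable \<beta> \<sigma> lam \<mu> \<psi> p q Y"
      and "is_REE \<beta> \<sigma> lam \<mu> \<psi> p q e1 e2 Y'" "E_stable \<beta> \<sigma> lam \<mu> \<psi> p q Y'" for Y Y'
    using E_stable_REE_unique[OF \<open>0 \<le> e2\<close> that] .
  ultimately show ?thesis
    by blast
qed

end
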